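(* For any convex quadrilateral $\Delta\subset\mathbb R^2$ there is a unique pair $(\alpha,\beta)$ with $0\le\beta<1\le\alpha$ and $\alpha-\beta\ge1$ such that $\Delta$ is affinely equivalent to the convex hull of $(0,0),(1,0),(\alpha,1-\beta),(0,1)$. If $\Delta$ has no pair of parallel edges, then $\beta>0$ and $\alpha>1$, and $\Delta$ is affinely equivalent to the orthotoric quadrilateral $\sigma([1,\alpha]\times[0,\beta])$, where $\sigma(x,y)=(x+y,xy)$.
   Context: The pair $(\alpha,\beta)$ is called the characteristic pair of $\Delta$. *)

theory Defs
  imports "HOL-Analysis.Analysis"
begin

definition affinely_equivalent :: "(real \<times> real) set \<Rightarrow> (real \<times> real) set \<Rightarrow> bool" where
  "affinely_equivalent A B \<longleftrightarrow>
     (\<exists>L c. linear L \<and> bij L \<and> (\<lambda>x. L x + c) ` A = B)"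

definition convex_quadrilateral :: "(real \<times> real) set \<Rightarrow> bool" where
  "convex_quadrilateral D \<longleftrightarrow>
     (\<exists>P. card P = 4 \<and> D = convex hull P \<and> (\<forall>p\<in>P. p \<notin> convex hull (P - {p})))"

definition is_edge :: "(real \<times> real) set \<Rightarrow> (real \<times> real) \<Rightarrow> (real \<times> real) \<Rightarrow> bool" where
  "is_edge D p q \<longleftrightarrow> p \<noteq> q \<and> closed_segment p q face_of D \<and> p extreme_point_of D \<and> q extreme_point_of D"

definition has_parallel_edges :: "(real \<times> real) set \<Rightarrow> bool" where
  "has_parallel_edges D \<longleftrightarrow>
     (\<exists>p q p' q'. is_edge D p q \<and> is_edge D p' q' \<and> closed_segment p q \<noteq> closed_segment p' q'
        \<and> (\<exists>t::real. q - p = t *\<^sub>R (q' - p')))"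

definition sigma :: "real \<times> real \<Rightarrow> real \<times> real" where
  "sigma xy = (fst xy + snd xy, fst xy * snd xy)"

definition model_quadrilateral :: "real \<Rightarrow> real \<Rightarrow> (real \<times> real) set" where
  "model_quadrilateral \<alpha> \<beta> = convex hull {(0,0), (1,0), (\<alpha>, 1 - \<beta>), (0,1)}"

end

theory Submission
  imports Defs
begin

(* Everything is expressed through the signed area (twice the oriented area) of triangles,
   [signed_area p q r], which an affine map x \<mapsto> L x + c multiplies by the determinant of L.

   Four convexly independent points can be labelled as consecutive vertices
   a, b, c, d of a convex quadrilateral, i.e. so that the four "corner" triangles d a b, a b c,
   b c d, c d a all have the same orientation.  Rotating/reflecting the labelling we may
   assume that the corner at B is the smallest and the corner at A the smaller of its two
   neighbours.  The affine map sending A, B, D to (0,0), (1,0), (0,1) then sends C to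
   (\<alpha>, 1 - \<beta>) with 0 \<le> \<beta> < 1 \<le> \<alpha> - \<beta>.

   An affine equivalence maps vertices to vertices, so it maps the set of triangle
   areas of the vertex set to a positive multiple of the set of triangle areas of the model,
   {0, 1 - \<beta>, 1, \<alpha> - \<beta>, \<alpha>}; the order relations among these numbers pin down \<alpha> and \<beta>.

   If \<beta> = 0 the model is a trapezoid, so (parallel edges being an affine
   invariant) a quadrilateral without parallel edges has \<beta> > 0 and hence \<alpha> > 1.  In that
   case \<sigma>([1,\<alpha>] \<times> [0,\<beta>]) is the convex hull of the four points \<sigma>(1,0), \<sigma>(1,\<beta>),
   \<sigma>(\<alpha>,\<beta>), \<sigma>(\<alpha>,0), and the affine map of the existence part identifies it with the
   model. *)

definition signed_area :: "real \<times> real \<Rightarrow> real \<times> real \<Rightarrow> real \<times> real \<Rightarrow> real" where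
  "signed_area p q r = (fst q - fst p) * (snd r - snd p) - (snd q - snd p) * (fst r - fst p)"

lemma signed_area_cyclic: "signed_area q r p = signed_area p q r"
  by (simp add: signed_area_def algebra_simps)

lemma signed_area_reverse: "signed_area r q p = - signed_area p q r"
  by (simp add: signed_area_def algebra_simps)

lemma signed_area_degenerate [simp]:
  "signed_area p p q = 0" "signed_area p q p = 0" "signed_area p q q = 0"
  by (simp_all add: signed_area_def)

(* The two diagonals of a quadrilateral a b c d split it into triangles in two ways. *)
lemma signed_area_four_points:
  "signed_area a b c + signed_area c d a = signed_area b c d + signed_area d a b"
  by (simp add: signed_area_def algebra_simps)

definition lin_det :: "(real \<times> real \<Rightarrow> real \<times> real) \<Rightarrow> real" where
  "lin_det L = fst (L (1,0)) * snd (L (0,1)) - snd (L (1,0)) * fst (L (0,1))"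

lemma linear_pair_expand:
  assumes "linear L"
  shows "L x = fst x *\<^sub>R L (1,0) + snd x *\<^sub>R L (0,1)"
proof -
  have "x = fst x *\<^sub>R (1,0) + snd x *\<^sub>R (0,1)" by (simp add: prod_eq_iff)
  then show ?thesis
    by (metis assms linear_add linear_cmul)
qed

lemma signed_area_affine_image:
  assumes "linear L"
  shows "signed_area (L p + c) (L q + c) (L r + c) = lin_det L * signed_area p q r"
  by (subst (1 2 3) linear_pair_expand[OF assms]) (simp add: signed_area_def lin_det_def algebra_simps)

lemma bij_if_lin_det_nonzero:
  assumes "linear L" "lin_det L \<noteq> 0"
  shows "bij L"
proof -
  have "x = 0" if "L x = 0" for x
  proof -
    have "fst x * fst (L (1,0)) + snd x * fst (L (0,1)) = 0"
         "fst x * snd (L (1,0)) + snd x * snd (L (0,1)) = 0"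
      using that linear_pair_expand[OF assms(1), of x] by (simp_all add: prod_eq_iff)
    then have "fst x * lin_det L = 0" "snd x * lin_det L = 0"
      unfolding lin_det_def by algebra+
    then show "x = 0" using assms(2) by (simp add: prod_eq_iff)
  qed
  then have "inj L" using linear_injective_0[OF assms(1)] by blast
  then show ?thesis using linear_inj_imp_surj[OF assms(1)] by (simp add: bij_def)
qed

lemma affine_image_as_translation:
  fixes L :: "'a \<Rightarrow> 'b::ab_semigroup_add"
  shows "(\<lambda>x. L x + c) ` S = (+) c ` (L ` S)"
  unfolding image_image by (rule image_cong[OF refl]) (rule add.commute)

lemma affine_image_convex_hull:
  assumes "linear L"
  shows "(\<lambda>x. L x + c) ` (convex hull S) = convex hull ((\<lambda>x. L x + c) ` S)"
  unfolding affine_image_as_translation convex_hull_translation convex_hull_linear_image[OF assms] ..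

lemma affine_image_closed_segment:
  assumes "linear L"
  shows "closed_segment (L p + c) (L q + c) = (\<lambda>x. L x + c) ` closed_segment p q"
  using closed_segment_translation[of c "L p" "L q"]
  unfolding affine_image_as_translation closed_segment_linear_image[OF assms] by (simp add: add.commute)

lemma affine_face_of_iff:
  fixes L :: "'a::real_vector \<Rightarrow> 'b::real_vector"
  assumes "linear L" "inj L"
  shows "((\<lambda>x. L x + c) ` T face_of (\<lambda>x. L x + c) ` S) \<longleftrightarrow> T face_of S"
  unfolding affine_image_as_translation face_of_translation_eq face_of_linear_image[OF assms] ..

lemma affine_extreme_point_iff:
  fixes L :: "'a::real_vector \<Rightarrow> 'b::real_vector"
  assumes "linear L" "inj L"
  shows "(L x + c) extreme_point_of ((\<lambda>x. L x + c) ` S) \<longleftrightarrow> x extreme_point_of S"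
  using affine_face_of_iff[OF assms, where T="{x}" and c=c and S=S]
  unfolding image_insert image_empty face_of_singleton .

lemma affinely_equivalent_sym:
  assumes "affinely_equivalent D E"
  shows "affinely_equivalent E D"
proof -
  obtain L c where L: "linear L" "bij L" "(\<lambda>x. L x + c) ` D = E"
    using assms unfolding affinely_equivalent_def by blast
  have lin: "linear (inv L)"
    using L by (simp add: bij_is_inj inj_linear_imp_inv_linear)
  have "(\<lambda>y. inv L y - inv L c) ` E = D"
  proof -
    have "inv L (L x + c) - inv L c = x" for x
      using L by (simp add: linear_add[OF lin] bij_is_inj)
    then show ?thesis
      unfolding L(3)[symmetric] image_image by simp
  qed
  then have "(\<lambda>y. inv L y + (- inv L c)) ` E = D" by simp
  with lin L(2) show ?thesis
    unfolding affinely_equivalent_def by (blast intro: bij_imp_bij_inv)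
qed

lemma affinely_equivalent_trans:
  assumes "affinely_equivalent D E" "affinely_equivalent E F"
  shows "affinely_equivalent D F"
proof -
  obtain L c where L: "linear L" "bij L" "(\<lambda>x. L x + c) ` D = E"
    using assms(1) unfolding affinely_equivalent_def by blast
  obtain M d where M: "linear M" "bij M" "(\<lambda>x. M x + d) ` E = F"
    using assms(2) unfolding affinely_equivalent_def by blast
  have "(\<lambda>x. (M \<circ> L) x + (M c + d)) ` D = F"
    unfolding M(3)[symmetric] L(3)[symmetric] image_image
    by (simp add: linear_add[OF M(1)] add.assoc)
  moreover have "linear (M \<circ> L)" "bij (M \<circ> L)"
    using L M by (simp_all add: linear_compose bij_comp)
  ultimately show ?thesis unfolding affinely_equivalent_def by blast
qed

(* The affine coordinates with respect to a non-degenerate triangle A B D: the affine map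
   sending A, B, D to (0,0), (1,0), (0,1) is given by ratios of signed areas. *)
lemma affine_frame_map:
  fixes A B D :: "real \<times> real"
  assumes T: "signed_area A B D \<noteq> 0"
  obtains L c where "linear L" "bij L"
    "\<And>p. L p + c = (signed_area A p D / signed_area A B D, signed_area A B p / signed_area A B D)"
proof -
  define T where "T = signed_area A B D"
  have T0: "T \<noteq> 0" using T unfolding T_def .
  define L where "L p = (signed_area 0 p (D - A) / T, signed_area 0 (B - A) p / T)" for p
  have lin: "linear L"
    unfolding L_def signed_area_def using T0 by (intro linearI) (simp_all add: field_simps)
  have L_frame: "L p - L A = (signed_area A p D / T, signed_area A B p / T)" for p
    unfolding L_def signed_area_def using T0 by (simp add: field_simps)
  have "lin_det L = signed_area 0 (B - A) (D - A) / (T * T)"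
    unfolding lin_det_def L_def signed_area_def using T0 by (simp add: field_simps)
  also have "signed_area 0 (B - A) (D - A) = T"
    by (simp add: T_def signed_area_def)
  finally have "lin_det L \<noteq> 0" using T0 by simp
  then have "bij L" by (rule bij_if_lin_det_nonzero[OF lin])
  then show ?thesis using that[OF lin, of "- L A"] L_frame unfolding T_def by simp
qed

lemma affinely_equivalent_model:
  fixes A B C D :: "real \<times> real"
  assumes "signed_area A B D \<noteq> 0"
  shows "affinely_equivalent (convex hull {A, B, C, D})
           (model_quadrilateral (signed_area A C D / signed_area A B D)
                                (1 - signed_area A B C / signed_area A B D))"
proof -
  obtain L c where L: "linear L" "bij L"
    "\<And>p. L p + c = (signed_area A p D / signed_area A B D, signed_area A B p / signed_area A B D)"
    using affine_frame_map[OF assms] by blast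
  have image: "(\<lambda>x. L x + c) ` {A, B, C, D} =
      {(0,0), (1,0), (signed_area A C D / signed_area A B D, signed_area A B C / signed_area A B D), (0,1)}"
    using assms by (simp add: L(3))
  have "(\<lambda>x. L x + c) ` (convex hull {A, B, C, D}) =
      model_quadrilateral (signed_area A C D / signed_area A B D)
                          (1 - signed_area A B C / signed_area A B D)"
    unfolding model_quadrilateral_def affine_image_convex_hull[OF L(1)] image by simp
  then show ?thesis
    unfolding affinely_equivalent_def using L(1,2) by blast
qed

(* A point on the inner side of all three edges of a triangle lies in the triangle
   (its barycentric coordinates are ratios of signed areas). *)
lemma in_triangle_if_same_side:
  assumes "signed_area a b c \<noteq> 0"
    and "0 \<le> signed_area d b c * signed_area a b c"
    and "0 \<le> signed_area a d c * signed_area a b c"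
    and "0 \<le> signed_area a b d * signed_area a b c"
  shows "d \<in> convex hull {a, b, c}"
proof -
  define S where "S = signed_area a b c"
  define u where "u = signed_area d b c / S"
  define v where "v = signed_area a d c / S"
  define w where "w = signed_area a b d / S"
  have S0: "S \<noteq> 0" using assms(1) unfolding S_def .
  have sum: "signed_area d b c + signed_area a d c + signed_area a b d = S"
    unfolding S_def signed_area_def by algebra
  have fst_d: "S * fst d = signed_area d b c * fst a + signed_area a d c * fst b + signed_area a b d * fst c"
    unfolding S_def signed_area_def by algebra
  have snd_d: "S * snd d = signed_area d b c * snd a + signed_area a d c * snd b + signed_area a b d * snd c"
    unfolding S_def signed_area_def by algebra
  have "0 \<le> u" "0 \<le> v" "0 \<le> w"
    using assms(2-4) unfolding u_def v_def w_def S_def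
    by (simp_all add: zero_le_divide_iff zero_le_mult_iff)
  moreover have "u + v + w = 1"
    using S0 sum unfolding u_def v_def w_def by (simp add: field_simps)
  moreover have "d = u *\<^sub>R a + v *\<^sub>R b + w *\<^sub>R c"
    using S0 fst_d snd_d unfolding u_def v_def w_def by (simp add: prod_eq_iff field_simps)
  ultimately show ?thesis unfolding convex_hull_3 by blast
qed

(* A vanishing signed area means collinearity: b - c is the projection of b - c onto a - c. *)
lemma collinear_if_signed_area_zero:
  assumes "signed_area a b c = 0"
  shows "collinear {a, b, c}"
proof (cases "a = c")
  case True
  then show ?thesis by (simp add: collinear_2 insert_commute)
next
  case False
  define N where "N = (fst a - fst c)\<^sup>2 + (snd a - snd c)\<^sup>2"
  define P where "P = (fst b - fst c) * (fst a - fst c) + (snd b - snd c) * (snd a - snd c)"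
  define u where "u = P / N"
  have "N \<noteq> 0"
    using False unfolding N_def by (simp add: prod_eq_iff add_nonneg_eq_0_iff)
  then have Nu: "N * u = P" unfolding u_def by simp
  have "N * (fst b - fst c) = P * (fst a - fst c)" "N * (snd b - snd c) = P * (snd a - snd c)"
    using assms unfolding N_def P_def signed_area_def power2_eq_square by algebra+
  then have "N * (fst b - fst c) = N * (u * (fst a - fst c))"
    "N * (snd b - snd c) = N * (u * (snd a - snd c))"
    by (simp_all add: Nu mult.assoc[symmetric])
  with \<open>N \<noteq> 0\<close> have "fst b - fst c = u * (fst a - fst c)" "snd b - snd c = u * (snd a - snd c)"
    by simp_all
  then have "b = u *\<^sub>R a + (1 - u) *\<^sub>R c"
    by (simp add: prod_eq_iff algebra_simps)
  then show ?thesis by (auto simp: collinear_3_expand)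
qed

lemma signed_area_nonzero:
  assumes "p \<notin> convex hull {q, r, s}" "q \<notin> convex hull {p, r, s}" "r \<notin> convex hull {p, q, s}"
  shows "signed_area p q r \<noteq> 0"
proof
  assume "signed_area p q r = 0"
  then have "p \<in> closed_segment q r \<or> q \<in> closed_segment p r \<or> r \<in> closed_segment p q"
    using collinear_if_signed_area_zero
    by (auto simp: collinear_between_cases between_mem_segment closed_segment_commute)
  moreover have seg: "closed_segment x y \<subseteq> convex hull {x, y, z}" for x y z :: "real \<times> real"
    unfolding segment_convex_hull by (rule hull_mono) auto
  ultimately show False
    using assms seg[of q r s] seg[of p r s] seg[of p q s] by blast
qed

(* a, b, c, d are consecutive vertices of a convex quadrilateral: all four corner triangles have
   the same orientation. *)
definition convex_cyclic :: "real \<times> real \<Rightarrow> real \<times> real \<Rightarrow> real \<times> real \<Rightarrow> real \<times> real \<Rightarrow> bool" where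
  "convex_cyclic a b c d \<longleftrightarrow>
     (0 < signed_area d a b \<and> 0 < signed_area a b c \<and> 0 < signed_area b c d \<and> 0 < signed_area c d a) \<or>
     (signed_area d a b < 0 \<and> signed_area a b c < 0 \<and> signed_area b c d < 0 \<and> signed_area c d a < 0)"

lemma convex_cyclic_rotate: "convex_cyclic a b c d \<Longrightarrow> convex_cyclic b c d a"
  unfolding convex_cyclic_def by auto

lemma convex_cyclic_reverse: "convex_cyclic a b c d \<Longrightarrow> convex_cyclic d c b a"
  unfolding convex_cyclic_def
  using signed_area_reverse[of c d a] signed_area_reverse[of b c d]
    signed_area_reverse[of a b c] signed_area_reverse[of d a b]
  by auto

(* Sign bookkeeping for four convexly independent points a, b, c, d with u1 = [a b c],
   u2 = [b c d], u3 = [a c d], u4 = [a b d]: if no point lies in the triangle of the others,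
   one of the orderings a b c d, a b d c, a c b d is convex cyclic. *)
lemma sign_pattern_of_four_points:
  fixes u1 u2 u3 u4 :: real
  assumes nonzero: "u1 \<noteq> 0" "u2 \<noteq> 0" "u3 \<noteq> 0" "u4 \<noteq> 0" and sum: "u1 + u3 = u2 + u4"
    and "\<not> (0 \<le> u3 * u2 \<and> 0 \<le> - u4 * u2 \<and> 0 \<le> u1 * u2)"
    and "\<not> (0 \<le> u2 * u3 \<and> 0 \<le> u4 * u3 \<and> 0 \<le> - u1 * u3)"
    and "\<not> (0 \<le> - u2 * u4 \<and> 0 \<le> u3 * u4 \<and> 0 \<le> u1 * u4)"
    and "\<not> (0 \<le> u2 * u1 \<and> 0 \<le> - u3 * u1 \<and> 0 \<le> u4 * u1)"
  shows "(0 < u4 \<and> 0 < u1 \<and> 0 < u2 \<and> 0 < u3) \<or> (u4 < 0 \<and> u1 < 0 \<and> u2 < 0 \<and> u3 < 0) \<or>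
         (0 < u1 \<and> 0 < u4 \<and> 0 < - u2 \<and> 0 < - u3) \<or> (u1 < 0 \<and> u4 < 0 \<and> - u2 < 0 \<and> - u3 < 0) \<or>
         (0 < u4 \<and> 0 < u3 \<and> 0 < - u1 \<and> 0 < - u2) \<or> (u4 < 0 \<and> u3 < 0 \<and> - u1 < 0 \<and> - u2 < 0)"
proof -
  have sign: "0 \<le> x * y \<longleftrightarrow> (0 < x \<longleftrightarrow> 0 < y)" "x * y \<le> 0 \<longleftrightarrow> (0 < x \<longleftrightarrow> \<not> 0 < y)"
    if "x \<noteq> 0" "y \<noteq> 0" for x y :: real
    using that by (auto simp: zero_le_mult_iff mult_le_0_iff)
  have neg: "x < 0 \<longleftrightarrow> \<not> 0 < x" if "x \<noteq> 0" for x :: real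
    using that by auto
  have "\<not> (0 < u1 \<and> 0 < u3 \<and> \<not> 0 < u2 \<and> \<not> 0 < u4)" "\<not> (\<not> 0 < u1 \<and> \<not> 0 < u3 \<and> 0 < u2 \<and> 0 < u4)"
    using sum nonzero by linarith+
  moreover have "\<not> ((0 < u3 \<longleftrightarrow> 0 < u2) \<and> (0 < u4 \<longleftrightarrow> \<not> 0 < u2) \<and> (0 < u1 \<longleftrightarrow> 0 < u2))"
    "\<not> ((0 < u2 \<longleftrightarrow> 0 < u3) \<and> (0 < u4 \<longleftrightarrow> 0 < u3) \<and> (0 < u1 \<longleftrightarrow> \<not> 0 < u3))"
    "\<not> ((0 < u2 \<longleftrightarrow> \<not> 0 < u4) \<and> (0 < u3 \<longleftrightarrow> 0 < u4) \<and> (0 < u1 \<longleftrightarrow> 0 < u4))"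
    "\<not> ((0 < u2 \<longleftrightarrow> 0 < u1) \<and> (0 < u3 \<longleftrightarrow> \<not> 0 < u1) \<and> (0 < u4 \<longleftrightarrow> 0 < u1))"
    using assms(6-9) by (simp_all add: sign nonzero)
  ultimately show ?thesis
    by (simp add: neg nonzero) blast
qed

lemma convex_cyclic_order_exists:
  assumes a: "a \<notin> convex hull {b, c, d}" and b: "b \<notin> convex hull {a, c, d}"
    and c: "c \<notin> convex hull {a, b, d}" and d: "d \<notin> convex hull {a, b, c}"
  shows "convex_cyclic a b c d \<or> convex_cyclic a b d c \<or> convex_cyclic a c b d"
proof -
  define u1 where "u1 = signed_area a b c"
  define u2 where "u2 = signed_area b c d"
  define u3 where "u3 = signed_area a c d"
  define u4 where "u4 = signed_area a b d"
  have eqs: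
    "signed_area a b c = u1" "signed_area b c d = u2" "signed_area a c d = u3" "signed_area a b d = u4"
    "signed_area c a b = u1" "signed_area b c a = u1" "signed_area a c b = - u1"
    "signed_area d b c = u2" "signed_area c b d = - u2" "signed_area b d c = - u2"
    "signed_area c d a = u3" "signed_area d a c = u3" "signed_area a d c = - u3" "signed_area d c a = - u3"
    "signed_area d a b = u4" "signed_area b d a = u4" "signed_area b a d = - u4"
    unfolding u1_def u2_def u3_def u4_def by (simp_all add: signed_area_def algebra_simps)
  have sum: "u1 + u3 = u2 + u4"
    using signed_area_four_points[of a b c d] by (simp only: eqs)
  have sets: "{c, d, a} = {a, c, d}" "{b, d, a} = {a, b, d}" "{b, c, a} = {a, b, c}"
    "{c, d, b} = {b, c, d}" "{a, d, b} = {a, b, d}" "{a, c, b} = {a, b, c}"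
    "{b, d, c} = {b, c, d}" "{a, d, c} = {a, c, d}"
    by auto
  have nonzero: "u1 \<noteq> 0" "u2 \<noteq> 0" "u3 \<noteq> 0" "u4 \<noteq> 0"
    unfolding u1_def u2_def u3_def u4_def
    using signed_area_nonzero[of a b c d] signed_area_nonzero[of b c d a]
      signed_area_nonzero[of a c d b] signed_area_nonzero[of a b d c] a b c d
    by (simp_all only: sets simp_thms)
  have "\<not> (0 \<le> u3 * u2 \<and> 0 \<le> - u4 * u2 \<and> 0 \<le> u1 * u2)"
    using a in_triangle_if_same_side[of b c d a] nonzero by (auto simp: eqs)
  moreover have "\<not> (0 \<le> u2 * u3 \<and> 0 \<le> u4 * u3 \<and> 0 \<le> - u1 * u3)"
    using b in_triangle_if_same_side[of a c d b] nonzero by (auto simp: eqs)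
  moreover have "\<not> (0 \<le> - u2 * u4 \<and> 0 \<le> u3 * u4 \<and> 0 \<le> u1 * u4)"
    using c in_triangle_if_same_side[of a b d c] nonzero by (auto simp: eqs)
  moreover have "\<not> (0 \<le> u2 * u1 \<and> 0 \<le> - u3 * u1 \<and> 0 \<le> u4 * u1)"
    using d in_triangle_if_same_side[of a b c d] nonzero by (auto simp: eqs)
  ultimately show ?thesis
    using sign_pattern_of_four_points[OF nonzero sum] unfolding convex_cyclic_def eqs by auto
qed

(* The labelling of the existence part: the corner at B is at most the corner at A, which is at
   most the corner at C (corner areas measured relative to the corner at A). *)
definition standard_labelling :: "real \<times> real \<Rightarrow> real \<times> real \<Rightarrow> real \<times> real \<Rightarrow> real \<times> real \<Rightarrow> bool" where
  "standard_labelling A B C D \<longleftrightarrow> signed_area D A B \<noteq> 0 \<and>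
     0 < signed_area A B C / signed_area D A B \<and> signed_area A B C / signed_area D A B \<le> 1 \<and>
     1 \<le> signed_area B C D / signed_area D A B"

lemma standard_labelling_parameters:
  assumes "standard_labelling A B C D"
  defines "\<alpha> \<equiv> signed_area A C D / signed_area A B D"
    and "\<beta> \<equiv> 1 - signed_area A B C / signed_area A B D"
  shows "0 \<le> \<beta> \<and> \<beta> < 1 \<and> 1 \<le> \<alpha> \<and> \<alpha> - \<beta> \<ge> 1"
proof -
  define T where "T = signed_area A B D"
  have T: "signed_area D A B = T" "signed_area A C D = signed_area C D A"
    unfolding T_def by (simp_all add: signed_area_cyclic)
  have "T \<noteq> 0" using assms(1) unfolding standard_labelling_def T by simp
  have "\<alpha> - \<beta> = signed_area B C D / T"
    using signed_area_four_points[of A B C D] \<open>T \<noteq> 0\<close>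
    unfolding \<alpha>_def \<beta>_def T_def[symmetric] T by (simp add: field_simps)
  then show ?thesis
    using assms(1) unfolding standard_labelling_def T \<alpha>_def \<beta>_def T_def[symmetric] by auto
qed

(* Comparing absolute corner areas suffices, since all corners of a convex cyclic labelling
   have the same orientation. *)
lemma standard_labelling_intro:
  assumes "convex_cyclic a b c d"
    and "\<bar>signed_area a b c\<bar> \<le> \<bar>signed_area d a b\<bar>" "\<bar>signed_area d a b\<bar> \<le> \<bar>signed_area b c d\<bar>"
  shows "standard_labelling a b c d"
proof -
  consider "0 < signed_area d a b" "0 < signed_area a b c" "0 < signed_area b c d"
    | "signed_area d a b < 0" "signed_area a b c < 0" "signed_area b c d < 0"
    using assms(1) unfolding convex_cyclic_def by blast
  then show ?thesis
  proof cases
    case 1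
    then show ?thesis
      using assms(2,3) unfolding standard_labelling_def by (simp add: divide_le_eq le_divide_eq)
  next
    case 2
    then show ?thesis
      using assms(2,3) unfolding standard_labelling_def
      by (simp add: divide_le_eq le_divide_eq zero_less_divide_iff)
  qed
qed

(* If the corner at b is not larger than its neighbours, a b c d or its reflection
   c b a d is a standard labelling. *)
lemma standard_labelling_at_local_min:
  assumes "convex_cyclic a b c d" "\<bar>signed_area a b c\<bar> \<le> \<bar>signed_area d a b\<bar>"
    "\<bar>signed_area a b c\<bar> \<le> \<bar>signed_area b c d\<bar>"
  shows "\<exists>A B C D. {A, B, C, D} = {a, b, c, d} \<and> standard_labelling A B C D"
proof (cases "\<bar>signed_area d a b\<bar> \<le> \<bar>signed_area b c d\<bar>")
  case True
  then have "standard_labelling a b c d"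
    using assms by (blast intro: standard_labelling_intro)
  then show ?thesis by blast
next
  case False
  have "convex_cyclic d a b c"
    using convex_cyclic_rotate[OF convex_cyclic_rotate[OF convex_cyclic_rotate[OF assms(1)]]] .
  then have "convex_cyclic c b a d" by (rule convex_cyclic_reverse)
  moreover have "\<bar>signed_area c b a\<bar> \<le> \<bar>signed_area d c b\<bar>" "\<bar>signed_area d c b\<bar> \<le> \<bar>signed_area b a d\<bar>"
    using assms False signed_area_reverse[of a b c] signed_area_reverse[of b c d]
      signed_area_reverse[of d a b] by auto
  ultimately have "standard_labelling c b a d" by (rule standard_labelling_intro)
  moreover have "{c, b, a, d} = {a, b, c, d}" by auto
  ultimately show ?thesis by blast
qed

(* Every convex cyclic labelling can be rotated into one whose second corner is minimal. *)
lemma standard_labelling_exists: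
  assumes "convex_cyclic a b c d"
  shows "\<exists>A B C D. {A, B, C, D} = {a, b, c, d} \<and> standard_labelling A B C D"
proof -
  have rot1: "convex_cyclic b c d a" using convex_cyclic_rotate[OF assms] .
  have rot2: "convex_cyclic c d a b" using convex_cyclic_rotate[OF rot1] .
  have rot3: "convex_cyclic d a b c" using convex_cyclic_rotate[OF rot2] .
  have sets: "{b, c, d, a} = {a, b, c, d}" "{c, d, a, b} = {a, b, c, d}" "{d, a, b, c} = {a, b, c, d}"
    by auto
  consider
      "\<bar>signed_area a b c\<bar> \<le> \<bar>signed_area d a b\<bar>" "\<bar>signed_area a b c\<bar> \<le> \<bar>signed_area b c d\<bar>"
    | "\<bar>signed_area b c d\<bar> \<le> \<bar>signed_area a b c\<bar>" "\<bar>signed_area b c d\<bar> \<le> \<bar>signed_area c d a\<bar>"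
    | "\<bar>signed_area c d a\<bar> \<le> \<bar>signed_area b c d\<bar>" "\<bar>signed_area c d a\<bar> \<le> \<bar>signed_area d a b\<bar>"
    | "\<bar>signed_area d a b\<bar> \<le> \<bar>signed_area c d a\<bar>" "\<bar>signed_area d a b\<bar> \<le> \<bar>signed_area a b c\<bar>"
    by argo
  then show ?thesis
  proof cases
    case 1
    then show ?thesis using standard_labelling_at_local_min[OF assms] by blast
  next
    case 2
    then show ?thesis using standard_labelling_at_local_min[OF rot1] sets(1) by simp
  next
    case 3
    then show ?thesis using standard_labelling_at_local_min[OF rot2] sets(2) by simp
  next
    case 4
    then show ?thesis using standard_labelling_at_local_min[OF rot3] sets(3) by simp
  qed
qed

lemma model_of_convex_independent_points:
  assumes "a \<notin> convex hull {b, c, d}" "b \<notin> convex hull {a, c, d}"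
    "c \<notin> convex hull {a, b, d}" "d \<notin> convex hull {a, b, c}"
  shows "\<exists>\<alpha> \<beta>. 0 \<le> \<beta> \<and> \<beta> < 1 \<and> 1 \<le> \<alpha> \<and> \<alpha> - \<beta> \<ge> 1
           \<and> affinely_equivalent (convex hull {a, b, c, d}) (model_quadrilateral \<alpha> \<beta>)"
proof -
  have "\<exists>A B C D. {A, B, C, D} = {a, b, c, d} \<and> standard_labelling A B C D"
    using convex_cyclic_order_exists[OF assms]
  proof (elim disjE)
    assume "convex_cyclic a b d c"
    moreover have "{a, b, d, c} = {a, b, c, d}" by auto
    ultimately show ?thesis using standard_labelling_exists[of a b d c] by (simp only:)
  next
    assume "convex_cyclic a c b d"
    moreover have "{a, c, b, d} = {a, b, c, d}" by auto
    ultimately show ?thesis using standard_labelling_exists[of a c b d] by (simp only:)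
  qed (rule standard_labelling_exists)
  then obtain A B C D where ABCD: "{A, B, C, D} = {a, b, c, d}" "standard_labelling A B C D"
    by blast
  have "signed_area A B D \<noteq> 0"
    using ABCD(2) signed_area_cyclic[of A B D] unfolding standard_labelling_def by simp
  moreover note ABCD(1)
  ultimately have "affinely_equivalent (convex hull {a, b, c, d})
      (model_quadrilateral (signed_area A C D / signed_area A B D)
                           (1 - signed_area A B C / signed_area A B D))"
    using affinely_equivalent_model[of A B D C] by simp
  with standard_labelling_parameters[OF ABCD(2)] show ?thesis by blast
qed

lemma card_4_elements:
  fixes P :: "'a set"
  assumes "card P = 4"
  shows "\<exists>a b c d. P = {a, b, c, d} \<and> a \<noteq> b \<and> a \<noteq> c \<and> a \<noteq> d \<and> b \<noteq> c \<and> b \<noteq> d \<and> c \<noteq> d"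
  using assms by (auto simp: card_Suc_eq numeral_eq_Suc)

lemma convex_quadrilateral_vertices:
  assumes "convex_quadrilateral D"
  obtains a b c d where "D = convex hull {a, b, c, d}"
    "a \<notin> convex hull {b, c, d}" "b \<notin> convex hull {a, c, d}"
    "c \<notin> convex hull {a, b, d}" "d \<notin> convex hull {a, b, c}"
proof -
  obtain P where P: "card P = 4" "D = convex hull P" "\<forall>p\<in>P. p \<notin> convex hull (P - {p})"
    using assms unfolding convex_quadrilateral_def by blast
  obtain a b c d where abcd: "P = {a, b, c, d}" "distinct [a, b, c, d]"
    using card_4_elements[OF P(1)] by auto
  have outside: "p \<notin> convex hull ({a, b, c, d} - {p})" if "p \<in> {a, b, c, d}" for p
    using P(3) that unfolding abcd(1) by blast
  have "{a, b, c, d} - {a} = {b, c, d}" "{a, b, c, d} - {b} = {a, c, d}"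
    "{a, b, c, d} - {c} = {a, b, d}" "{a, b, c, d} - {d} = {a, b, c}"
    using abcd(2) by auto
  then have "a \<notin> convex hull {b, c, d}" "b \<notin> convex hull {a, c, d}"
    "c \<notin> convex hull {a, b, d}" "d \<notin> convex hull {a, b, c}"
    using outside[of a] outside[of b] outside[of c] outside[of d] by auto
  moreover have "D = convex hull {a, b, c, d}" using P(2) abcd(1) by simp
  ultimately show ?thesis using that by blast
qed

lemma model_exists:
  assumes "convex_quadrilateral D"
  shows "\<exists>\<alpha> \<beta>. 0 \<le> \<beta> \<and> \<beta> < 1 \<and> 1 \<le> \<alpha> \<and> \<alpha> - \<beta> \<ge> 1
           \<and> affinely_equivalent D (model_quadrilateral \<alpha> \<beta>)"
proof -
  obtain a b c d where "D = convex hull {a, b, c, d}"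
    "a \<notin> convex hull {b, c, d}" "b \<notin> convex hull {a, c, d}"
    "c \<notin> convex hull {a, b, d}" "d \<notin> convex hull {a, b, c}"
    using convex_quadrilateral_vertices[OF assms] by blast
  then show ?thesis using model_of_convex_independent_points by simp
qed

lemma affine_image_vertices:
  fixes L :: "'a::euclidean_space \<Rightarrow> 'a"
  assumes "linear L" "inj L" "finite P" "\<forall>p\<in>P. p \<notin> convex hull (P - {p})"
    and image: "(\<lambda>x. L x + c) ` (convex hull P) = convex hull V"
    and "finite V" "card V \<le> card P"
  shows "(\<lambda>x. L x + c) ` P = V"
proof (rule card_seteq)
  show "(\<lambda>x. L x + c) ` P \<subseteq> V"
  proof clarify
    fix p assume "p \<in> P"
    moreover have "compact P" using assms(3) by (rule finite_imp_compact)
    ultimately have "p extreme_point_of convex hull P"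
      using extreme_point_of_convex_hull_convex_independent[of P p] assms(4) by simp
    then have "(L p + c) extreme_point_of convex hull V"
      unfolding image[symmetric] affine_extreme_point_iff[OF assms(1,2)] .
    then show "L p + c \<in> V" by (rule extreme_point_of_convex_hull)
  qed
  have "inj_on (\<lambda>x. L x + c) P"
  proof (rule inj_onI)
    fix x y assume "L x + c = L y + c"
    then show "x = y" using injD[OF assms(2)] by simp
  qed
  then show "card V \<le> card ((\<lambda>x. L x + c) ` P)"
    using assms(7) by (simp add: card_image)
qed (fact \<open>finite V\<close>)

lemma model_vertices_of_quadrilateral:
  fixes L :: "real \<times> real \<Rightarrow> real \<times> real"
  assumes "card P = 4" "\<forall>p\<in>P. p \<notin> convex hull (P - {p})"
    and "linear L" "bij L" "(\<lambda>x. L x + c) ` (convex hull P) = model_quadrilateral \<alpha> \<beta>"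
  shows "(\<lambda>x. L x + c) ` P = {(0,0), (1,0), (\<alpha>, 1 - \<beta>), (0,1)}"
proof (rule affine_image_vertices)
  show "finite P" using assms(1) by (intro card_ge_0_finite) simp
  show "card {(0,0), (1,0), (\<alpha>, 1 - \<beta>), (0::real,1::real)} \<le> card P"
    using assms(1) by (simp add: card_insert_if)
qed (use assms bij_is_inj in \<open>auto simp: model_quadrilateral_def\<close>)

definition triangle_areas :: "(real \<times> real) set \<Rightarrow> real set" where
  "triangle_areas S = {\<bar>signed_area p q r\<bar> | p q r. p \<in> S \<and> q \<in> S \<and> r \<in> S}"

lemma triangle_areas_affine_image:
  assumes "linear L"
  shows "triangle_areas ((\<lambda>x. L x + c) ` S) = (\<lambda>t. \<bar>lin_det L\<bar> * t) ` triangle_areas S"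
  (is "_ = ?scale ` _")
proof
  show "triangle_areas ((\<lambda>x. L x + c) ` S) \<subseteq> ?scale ` triangle_areas S"
  proof
    fix t assume "t \<in> triangle_areas ((\<lambda>x. L x + c) ` S)"
    then obtain p q r where pqr: "p \<in> S" "q \<in> S" "r \<in> S"
      and t: "t = \<bar>signed_area (L p + c) (L q + c) (L r + c)\<bar>"
      unfolding triangle_areas_def by blast
    have "t = ?scale \<bar>signed_area p q r\<bar>"
      unfolding t by (simp add: signed_area_affine_image[OF assms] abs_mult)
    moreover have "\<bar>signed_area p q r\<bar> \<in> triangle_areas S"
      using pqr unfolding triangle_areas_def by blast
    ultimately show "t \<in> ?scale ` triangle_areas S" by blast
  qed
  show "?scale ` triangle_areas S \<subseteq> triangle_areas ((\<lambda>x. L x + c) ` S)"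
  proof clarify
    fix t assume "t \<in> triangle_areas S"
    then obtain p q r where "p \<in> S" "q \<in> S" "r \<in> S" "t = \<bar>signed_area p q r\<bar>"
      unfolding triangle_areas_def by blast
    then show "\<bar>lin_det L\<bar> * t \<in> triangle_areas ((\<lambda>x. L x + c) ` S)"
      unfolding triangle_areas_def
      by (intro CollectI exI[of _ "L p + c"] exI[of _ "L q + c"] exI[of _ "L r + c"])
         (simp add: signed_area_affine_image[OF assms] abs_mult)
  qed
qed

lemma abs_signed_area_swap:
  "\<bar>signed_area q p r\<bar> = \<bar>signed_area p q r\<bar>" "\<bar>signed_area p r q\<bar> = \<bar>signed_area p q r\<bar>"
  by (simp_all add: signed_area_def abs_minus_commute algebra_simps)

lemma triangle_areas_four_points:
  "triangle_areas {a, b, c, d} =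
    {0, \<bar>signed_area a b c\<bar>, \<bar>signed_area a b d\<bar>, \<bar>signed_area a c d\<bar>, \<bar>signed_area b c d\<bar>}"
proof
  show "triangle_areas {a, b, c, d} \<subseteq>
    {0, \<bar>signed_area a b c\<bar>, \<bar>signed_area a b d\<bar>, \<bar>signed_area a c d\<bar>, \<bar>signed_area b c d\<bar>}"
    unfolding triangle_areas_def
    by clarify (elim insertE emptyE; simp add: abs_signed_area_swap)
  have "0 \<in> triangle_areas {a, b, c, d}"
    unfolding triangle_areas_def by (intro CollectI exI[of _ a]) simp
  then show "{0, \<bar>signed_area a b c\<bar>, \<bar>signed_area a b d\<bar>, \<bar>signed_area a c d\<bar>, \<bar>signed_area b c d\<bar>}
      \<subseteq> triangle_areas {a, b, c, d}"
    unfolding triangle_areas_def by blast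
qed

lemma triangle_areas_model:
  assumes "0 \<le> \<beta>" "\<beta> < 1" "1 \<le> \<alpha>" "\<alpha> - \<beta> \<ge> 1"
  shows "triangle_areas {(0,0), (1,0), (\<alpha>, 1 - \<beta>), (0,1)} = {0, 1 - \<beta>, 1, \<alpha>, \<alpha> - \<beta>}"
  unfolding triangle_areas_four_points using assms by (simp add: signed_area_def insert_commute)

lemma balanced_quadruple_determined:
  fixes n1 n2 n3 n4 m1 m2 m3 m4 :: real
  assumes n: "0 < n1" "n1 \<le> n2" "n2 \<le> n3" "n3 \<le> n4" "n1 + n4 = n2 + n3"
    and m: "0 < m1" "m1 \<le> m2" "m2 \<le> m3" "m3 \<le> m4" "m1 + m4 = m2 + m3"
    and eq: "{0, n1, n2, n3, n4} = {0, m1, m2, m3, m4}"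
  shows "n1 = m1 \<and> n2 = m2 \<and> n4 = m4"
proof -
  have mem: "x \<in> {0, n1, n2, n3, n4} \<longleftrightarrow> x \<in> {0, m1, m2, m3, m4}" for x
    using eq by simp
  have "n1 = m1 \<or> n1 = m2 \<or> n1 = m3 \<or> n1 = m4" "m1 = n1 \<or> m1 = n2 \<or> m1 = n3 \<or> m1 = n4"
    using mem[of n1] mem[of m1] n(1) m(1) by auto
  then have 1: "n1 = m1" using n m by (elim disjE; linarith)
  have "n4 = m1 \<or> n4 = m2 \<or> n4 = m3 \<or> n4 = m4" "m4 = n1 \<or> m4 = n2 \<or> m4 = n3 \<or> m4 = n4"
    using mem[of n4] mem[of m4] n m by auto
  then have 4: "n4 = m4" using n m by (elim disjE; linarith)
  have "n2 = m1 \<or> n2 = m2 \<or> n2 = m3 \<or> n2 = m4" "m2 = n1 \<or> m2 = n2 \<or> m2 = n3 \<or> m2 = n4"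
    using mem[of n2] mem[of m2] n m by auto
  then have "n2 = m2" using n m 1 4 by (elim disjE; linarith)
  with 1 4 show ?thesis by simp
qed

lemma model_parameters_from_areas:
  fixes \<alpha>1 \<beta>1 \<alpha>2 \<beta>2 r :: real
  assumes c1: "0 \<le> \<beta>1" "\<beta>1 < 1" "1 \<le> \<alpha>1" "\<alpha>1 - \<beta>1 \<ge> 1"
    and c2: "0 \<le> \<beta>2" "\<beta>2 < 1" "1 \<le> \<alpha>2" "\<alpha>2 - \<beta>2 \<ge> 1"
    and "r > 0"
    and scaled: "(\<lambda>t. r * t) ` {0, 1 - \<beta>1, 1, \<alpha>1, \<alpha>1 - \<beta>1} = {0, 1 - \<beta>2, 1, \<alpha>2, \<alpha>2 - \<beta>2}"
  shows "\<alpha>1 = \<alpha>2 \<and> \<beta>1 = \<beta>2"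
proof -
  have "{0, r * (1 - \<beta>1), r, r * (\<alpha>1 - \<beta>1), r * \<alpha>1} =
      {0, r * (1 - \<beta>1), r, r * \<alpha>1, r * (\<alpha>1 - \<beta>1)}"
    by blast
  also have "\<dots> = (\<lambda>t. r * t) ` {0, 1 - \<beta>1, 1, \<alpha>1, \<alpha>1 - \<beta>1}"
    by simp
  also have "\<dots> = {0, 1 - \<beta>2, 1, \<alpha>2, \<alpha>2 - \<beta>2}"
    by (fact scaled)
  also have "\<dots> = {0, 1 - \<beta>2, 1, \<alpha>2 - \<beta>2, \<alpha>2}"
    by blast
  finally have "{0, r * (1 - \<beta>1), r, r * (\<alpha>1 - \<beta>1), r * \<alpha>1} = {0, 1 - \<beta>2, 1, \<alpha>2 - \<beta>2, \<alpha>2}" .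
  moreover have "0 < r * (1 - \<beta>1)" "r * (1 - \<beta>1) \<le> r * 1" "r * 1 \<le> r * (\<alpha>1 - \<beta>1)"
    "r * (\<alpha>1 - \<beta>1) \<le> r * \<alpha>1"
    using \<open>r > 0\<close> c1 by (simp, (intro mult_left_mono; simp)+)
  moreover have "r * (1 - \<beta>1) + r * \<alpha>1 = r + r * (\<alpha>1 - \<beta>1)"
    by (simp add: algebra_simps)
  ultimately have "r * (1 - \<beta>1) = 1 - \<beta>2 \<and> r = 1 \<and> r * \<alpha>1 = \<alpha>2"
    using c2 by (intro balanced_quadruple_determined) auto
  then show ?thesis by auto
qed

lemma model_area_set:
  assumes P: "card P = 4" "\<forall>p\<in>P. p \<notin> convex hull (P - {p})"
    and conds: "0 \<le> \<beta>" "\<beta> < 1" "1 \<le> \<alpha>" "\<alpha> - \<beta> \<ge> 1"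
    and equiv: "affinely_equivalent (convex hull P) (model_quadrilateral \<alpha> \<beta>)"
  shows "\<exists>k>0. {0, 1 - \<beta>, 1, \<alpha>, \<alpha> - \<beta>} = (\<lambda>t. k * t) ` triangle_areas P"
proof -
  obtain L c where L: "linear L" "bij L" "(\<lambda>x. L x + c) ` (convex hull P) = model_quadrilateral \<alpha> \<beta>"
    using equiv unfolding affinely_equivalent_def by blast
  have vertices: "(\<lambda>x. L x + c) ` P = {(0,0), (1,0), (\<alpha>, 1 - \<beta>), (0,1)}"
    by (rule model_vertices_of_quadrilateral[OF P L])
  have areas: "{0, 1 - \<beta>, 1, \<alpha>, \<alpha> - \<beta>} = (\<lambda>t. \<bar>lin_det L\<bar> * t) ` triangle_areas P"
    unfolding triangle_areas_model[OF conds, symmetric] vertices[symmetric]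
    by (rule triangle_areas_affine_image[OF L(1)])
  have "(1::real) \<in> (\<lambda>t. \<bar>lin_det L\<bar> * t) ` triangle_areas P"
    unfolding areas[symmetric] by simp
  then have "lin_det L \<noteq> 0" by auto
  with areas show ?thesis by (intro exI[of _ "\<bar>lin_det L\<bar>"]) simp
qed

lemma model_unique:
  assumes "convex_quadrilateral D"
    and c1: "0 \<le> \<beta>1" "\<beta>1 < 1" "1 \<le> \<alpha>1" "\<alpha>1 - \<beta>1 \<ge> 1"
    and e1: "affinely_equivalent D (model_quadrilateral \<alpha>1 \<beta>1)"
    and c2: "0 \<le> \<beta>2" "\<beta>2 < 1" "1 \<le> \<alpha>2" "\<alpha>2 - \<beta>2 \<ge> 1"
    and e2: "affinely_equivalent D (model_quadrilateral \<alpha>2 \<beta>2)"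
  shows "\<alpha>1 = \<alpha>2 \<and> \<beta>1 = \<beta>2"
proof -
  obtain P where P: "card P = 4" "D = convex hull P" "\<forall>p\<in>P. p \<notin> convex hull (P - {p})"
    using assms(1) unfolding convex_quadrilateral_def by blast
  obtain k1 where k1: "k1 > 0" "{0, 1 - \<beta>1, 1, \<alpha>1, \<alpha>1 - \<beta>1} = (\<lambda>t. k1 * t) ` triangle_areas P"
    using model_area_set[OF P(1,3) c1] e1 P(2) by blast
  obtain k2 where k2: "k2 > 0" "{0, 1 - \<beta>2, 1, \<alpha>2, \<alpha>2 - \<beta>2} = (\<lambda>t. k2 * t) ` triangle_areas P"
    using model_area_set[OF P(1,3) c2] e2 P(2) by blast
  have "k2 / k1 > 0" using k1(1) k2(1) by simp
  moreover have "(\<lambda>t. k2 / k1 * t) ` {0, 1 - \<beta>1, 1, \<alpha>1, \<alpha>1 - \<beta>1} = {0, 1 - \<beta>2, 1, \<alpha>2, \<alpha>2 - \<beta>2}"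
    unfolding k1(2) k2(2) image_image using k1(1) by simp
  ultimately show ?thesis by (rule model_parameters_from_areas[OF c1 c2])
qed

lemma model_exists_unique:
  assumes "convex_quadrilateral D"
  shows "\<exists>!(\<alpha>, \<beta>). 0 \<le> \<beta> \<and> \<beta> < 1 \<and> 1 \<le> \<alpha> \<and> \<alpha> - \<beta> \<ge> 1
           \<and> affinely_equivalent D (model_quadrilateral \<alpha> \<beta>)"
proof -
  obtain \<alpha>0 \<beta>0 where model0: "0 \<le> \<beta>0 \<and> \<beta>0 < 1 \<and> 1 \<le> \<alpha>0 \<and> \<alpha>0 - \<beta>0 \<ge> 1
      \<and> affinely_equivalent D (model_quadrilateral \<alpha>0 \<beta>0)"
    using model_exists[OF assms] by blast
  show ?thesis
  proof (rule ex1I[of _ "(\<alpha>0, \<beta>0)"])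
    fix ab assume "case ab of (\<alpha>, \<beta>) \<Rightarrow> 0 \<le> \<beta> \<and> \<beta> < 1 \<and> 1 \<le> \<alpha> \<and> \<alpha> - \<beta> \<ge> 1
      \<and> affinely_equivalent D (model_quadrilateral \<alpha> \<beta>)"
    moreover obtain \<alpha> \<beta> where ab: "ab = (\<alpha>, \<beta>)" by (cases ab)
    ultimately have "0 \<le> \<beta>" "\<beta> < 1" "1 \<le> \<alpha>" "\<alpha> - \<beta> \<ge> 1"
      "affinely_equivalent D (model_quadrilateral \<alpha> \<beta>)" by auto
    then have "\<alpha> = \<alpha>0 \<and> \<beta> = \<beta>0"
      using model0 by (intro model_unique[OF assms]) auto
    then show "ab = (\<alpha>0, \<beta>0)" using ab by simp
  qed (use model0 in simp)
qed

lemma is_edge_affine_preimage: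
  fixes L :: "real \<times> real \<Rightarrow> real \<times> real"
  assumes "linear L" "inj L" "is_edge ((\<lambda>x. L x + c) ` S) (L p + c) (L q + c)"
  shows "is_edge S p q"
  using assms(3)
  unfolding is_edge_def affine_image_closed_segment[OF assms(1)]
    affine_face_of_iff[OF assms(1,2)] affine_extreme_point_iff[OF assms(1,2)]
  by auto

lemma has_parallel_edges_affine_preimage:
  fixes L :: "real \<times> real \<Rightarrow> real \<times> real"
  assumes L: "linear L" "inj L" and par: "has_parallel_edges ((\<lambda>x. L x + c) ` S)"
  shows "has_parallel_edges S"
proof -
  let ?f = "\<lambda>x. L x + c"
  obtain p q p' q' t where edges: "is_edge (?f ` S) p q" "is_edge (?f ` S) p' q'"
    and distinct: "closed_segment p q \<noteq> closed_segment p' q'" and parallel: "q - p = t *\<^sub>R (q' - p')"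
    using par unfolding has_parallel_edges_def by blast
  have "p \<in> ?f ` S" "q \<in> ?f ` S" "p' \<in> ?f ` S" "q' \<in> ?f ` S"
    using edges unfolding is_edge_def extreme_point_of_def by auto
  then obtain p0 q0 p0' q0' where pre: "p = ?f p0" "q = ?f q0" "p' = ?f p0'" "q' = ?f q0'"
    by blast
  have "is_edge S p0 q0" "is_edge S p0' q0'"
    using edges is_edge_affine_preimage[OF L] unfolding pre by blast+
  moreover have "closed_segment p0 q0 \<noteq> closed_segment p0' q0'"
  proof
    assume "closed_segment p0 q0 = closed_segment p0' q0'"
    then have "closed_segment p q = closed_segment p' q'"
      unfolding pre affine_image_closed_segment[OF L(1)] by (rule arg_cong)
    with distinct show False ..
  qed
  moreover have "L (q0 - p0) = L (t *\<^sub>R (q0' - p0'))"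
    using parallel unfolding pre by (simp add: linear_diff[OF L(1)] linear_cmul[OF L(1)])
  then have "q0 - p0 = t *\<^sub>R (q0' - p0')" using L(2) by (simp add: inj_eq)
  ultimately show ?thesis unfolding has_parallel_edges_def by blast
qed

lemma face_of_convex_hull_between_parallel_lines:
  fixes v :: "'a::euclidean_space"
  assumes "finite S" "T \<subseteq> S" "T \<subseteq> {x. v \<bullet> x = a}" "S - T \<subseteq> {x. v \<bullet> x = b}" "a \<noteq> b"
  shows "convex hull T face_of convex hull S"
proof (rule face_of_convex_hulls)
  have "affine hull T \<subseteq> {x. v \<bullet> x = a}"
    using assms(3) affine_hyperplane by (rule hull_minimal)
  moreover have "convex hull (S - T) \<subseteq> {x. v \<bullet> x = b}"
    using assms(4) convex_hyperplane by (rule hull_minimal)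
  ultimately show "affine hull T \<inter> convex hull (S - T) = {}"
    using assms(5) by blast
qed (use assms in auto)

(* For \<beta> = 0 the model is a trapezoid with horizontal bottom and top edges. *)
lemma trapezoid_has_parallel_edges:
  assumes "1 \<le> \<alpha>"
    and vertices: "\<And>v. v \<in> {(0,0), (1,0), (\<alpha>, 1), (0,1)} \<Longrightarrow> v extreme_point_of model_quadrilateral \<alpha> 0"
  shows "has_parallel_edges (model_quadrilateral \<alpha> 0)"
proof -
  define V where "V = {(0,0), (1,0), (\<alpha>, 1), (0::real, 1::real)}"
  have model: "model_quadrilateral \<alpha> 0 = convex hull V"
    unfolding model_quadrilateral_def V_def by simp
  have level: "(0::real, 1::real) \<bullet> x = snd x" for x :: "real \<times> real"
    by (simp add: inner_prod_def)
  have "convex hull {(0,0), (1,0)} face_of model_quadrilateral \<alpha> 0"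
    unfolding model
    by (rule face_of_convex_hull_between_parallel_lines[where v="(0,1)" and a=0 and b=1])
       (auto simp: V_def level)
  moreover have "convex hull {(\<alpha>,1), (0,1)} face_of model_quadrilateral \<alpha> 0"
    unfolding model
    by (rule face_of_convex_hull_between_parallel_lines[where v="(0,1)" and a=1 and b=0])
       (auto simp: V_def level)
  ultimately have "is_edge (model_quadrilateral \<alpha> 0) (0,0) (1,0)"
    "is_edge (model_quadrilateral \<alpha> 0) (\<alpha>,1) (0,1)"
    using vertices assms(1) unfolding is_edge_def segment_convex_hull by auto
  moreover have "closed_segment (\<alpha>,1) (0,1) \<subseteq> {x. (0::real, 1::real) \<bullet> x = 1}"
    unfolding segment_convex_hull by (rule hull_minimal) (simp add: level, rule convex_hyperplane)
  then have "closed_segment (0,0) (1::real,0::real) \<noteq> closed_segment (\<alpha>,1) (0,1)"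
    using ends_in_segment(1)[of "(0::real, 0::real)" "(1, 0)"] level by auto
  moreover have "(1,0) - (0,0) = (- 1 / \<alpha>) *\<^sub>R ((0,1) - (\<alpha>, 1::real))"
    using assms(1) by simp
  ultimately show ?thesis unfolding has_parallel_edges_def by blast
qed

(* A quadrilateral without parallel edges is not equivalent to a trapezoid model.  The
   model vertices are extreme points because they are images of the vertices of D. *)
lemma beta_nonzero_if_no_parallel_edges:
  assumes D: "convex_quadrilateral D" and "1 \<le> \<alpha>"
    and equiv: "affinely_equivalent D (model_quadrilateral \<alpha> \<beta>)" and no_par: "\<not> has_parallel_edges D"
  shows "\<beta> \<noteq> 0"
proof
  assume "\<beta> = 0"
  obtain P where P: "card P = 4" "D = convex hull P" "\<forall>p\<in>P. p \<notin> convex hull (P - {p})"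
    using D unfolding convex_quadrilateral_def by blast
  obtain L c where L: "linear L" "bij L" "(\<lambda>x. L x + c) ` D = model_quadrilateral \<alpha> 0"
    using equiv \<open>\<beta> = 0\<close> unfolding affinely_equivalent_def by blast
  have inj: "inj L" using L(2) by (rule bij_is_inj)
  have "(\<lambda>x. L x + c) ` (convex hull P) = model_quadrilateral \<alpha> 0"
    using L(3) unfolding P(2) .
  then have "(\<lambda>x. L x + c) ` P = {(0,0), (1,0), (\<alpha>, 1 - 0), (0,1)}"
    by (rule model_vertices_of_quadrilateral[OF P(1,3) L(1,2)])
  then have vertices: "(\<lambda>x. L x + c) ` P = {(0,0), (1,0), (\<alpha>, 1), (0,1)}"
    by (simp only: diff_zero)
  have "v extreme_point_of model_quadrilateral \<alpha> 0" if "v \<in> {(0,0), (1,0), (\<alpha>, 1), (0,1)}" for v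
  proof -
    have "v \<in> (\<lambda>x. L x + c) ` P" using that unfolding vertices .
    then obtain p where "p \<in> P" "v = L p + c" by blast
    moreover have "finite P" using P(1) by (intro card_ge_0_finite) simp
    ultimately have "p extreme_point_of D"
      using extreme_point_of_convex_hull_convex_independent[OF finite_imp_compact] P(2,3) by blast
    then show ?thesis
      unfolding \<open>v = L p + c\<close> L(3)[symmetric] affine_extreme_point_iff[OF L(1) inj] .
  qed
  then have "has_parallel_edges ((\<lambda>x. L x + c) ` D)"
    unfolding L(3) using trapezoid_has_parallel_edges[OF \<open>1 \<le> \<alpha>\<close>] by blast
  then show False
    using has_parallel_edges_affine_preimage[OF L(1) inj] no_par by blast
qed

(* It lies between the lines y = 0, y = x - 1, y = \<alpha> (x - \<alpha>), y = \<beta> (x - \<beta>),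
   the tangents of the parabola x\<^sup>2 = 4 y at \<sigma>(t,t) for t = 0, 1, \<alpha>, \<beta>. *)
lemma sigma_rectangle_subset_hull:
  fixes \<alpha> \<beta> :: real
  assumes "0 < \<beta>" "\<beta> < 1" "1 < \<alpha>"
  shows "sigma ` ({1..\<alpha>} \<times> {0..\<beta>}) \<subseteq> convex hull {(1,0), (1+\<beta>,\<beta>), (\<alpha>+\<beta>,\<alpha>*\<beta>), (\<alpha>,0)}"
proof
  fix z assume "z \<in> sigma ` ({1..\<alpha>} \<times> {0..\<beta>})"
  then obtain x y where xy: "1 \<le> x" "x \<le> \<alpha>" "0 \<le> y" "y \<le> \<beta>" and z: "z = sigma (x, y)"
    by auto
  define Q where "Q = convex hull {(1,0), (1+\<beta>,\<beta>), (\<alpha>+\<beta>,\<alpha>*\<beta>), (\<alpha>,0::real)}"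
  have combine: "(1 - u) *\<^sub>R p + u *\<^sub>R q \<in> Q" if "p \<in> Q" "q \<in> Q" "0 \<le> u" "u \<le> 1" for p q u
    using that convex_convex_hull[of "{(1,0), (1+\<beta>,\<beta>), (\<alpha>+\<beta>,\<alpha>*\<beta>), (\<alpha>,0::real)}"]
    unfolding Q_def convex_alt by blast
  have vertices: "(1,0) \<in> Q" "(1+\<beta>,\<beta>) \<in> Q" "(\<alpha>+\<beta>,\<alpha>*\<beta>) \<in> Q" "(\<alpha>,0) \<in> Q"
    unfolding Q_def by (simp_all add: hull_inc)
  define s where "s = (x - 1) / (\<alpha> - 1)"
  define t where "t = y / \<beta>"
  have s: "0 \<le> s" "s \<le> 1" and t: "0 \<le> t" "t \<le> 1"
    using xy assms unfolding s_def t_def by (auto simp: field_simps)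
  have "(1 - t) *\<^sub>R (1,0) + t *\<^sub>R (1+\<beta>,\<beta>) \<in> Q" "(1 - t) *\<^sub>R (\<alpha>,0) + t *\<^sub>R (\<alpha>+\<beta>,\<alpha>*\<beta>) \<in> Q"
    using combine[OF vertices(1,2) t] combine[OF vertices(4,3) t] by simp_all
  from combine[OF this s] have
    "(1 - s) *\<^sub>R ((1 - t) *\<^sub>R (1,0) + t *\<^sub>R (1+\<beta>,\<beta>))
      + s *\<^sub>R ((1 - t) *\<^sub>R (\<alpha>,0) + t *\<^sub>R (\<alpha>+\<beta>,\<alpha>*\<beta>)) \<in> Q" .
  moreover have xs: "x = 1 + s * (\<alpha> - 1)" and yt: "y = t * \<beta>"
    using assms unfolding s_def t_def by (simp_all add: field_simps)
  have "(1 - s) *\<^sub>R ((1 - t) *\<^sub>R (1,0) + t *\<^sub>R (1+\<beta>,\<beta>))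
      + s *\<^sub>R ((1 - t) *\<^sub>R (\<alpha>,0) + t *\<^sub>R (\<alpha>+\<beta>,\<alpha>*\<beta>)) = z"
    unfolding z xs yt by (simp add: sigma_def prod_eq_iff algebra_simps)
  ultimately show "z \<in> convex hull {(1,0), (1+\<beta>,\<beta>), (\<alpha>+\<beta>,\<alpha>*\<beta>), (\<alpha>,0)}"
    unfolding Q_def by simp
qed

(* Locating the roots r1 \<le> r2 of a monic quadratic from its signs at 0 (product of the roots),
   1, \<beta> and \<alpha>. *)
lemma roots_between_test_points:
  fixes r1 r2 \<alpha> \<beta> :: real
  assumes "r1 \<le> r2" "\<beta> < 1" "1 < \<alpha>"
    and "(1 - r1) * (1 - r2) \<le> 0" "(\<beta> - r1) * (\<beta> - r2) \<le> 0" "0 \<le> (\<alpha> - r1) * (\<alpha> - r2)"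
    and "0 \<le> r1 * r2"
  shows "1 \<le> r2" "r2 \<le> \<alpha>" "0 \<le> r1" "r1 \<le> \<beta>"
proof -
  show "1 \<le> r2"
  proof (rule ccontr)
    assume "\<not> 1 \<le> r2"
    then have "0 < (1 - r1) * (1 - r2)" using assms(1) by simp
    then show False using assms(4) by simp
  qed
  show "r1 \<le> \<beta>"
  proof (rule ccontr)
    assume "\<not> r1 \<le> \<beta>"
    then have "0 < (\<beta> - r1) * (\<beta> - r2)" using assms(1) by (simp add: mult_neg_neg)
    then show False using assms(5) by simp
  qed
  show "0 \<le> r1"
  proof (rule ccontr)
    assume "\<not> 0 \<le> r1"
    then have "r1 * r2 < 0" using \<open>1 \<le> r2\<close> by (simp add: mult_neg_pos)
    then show False using assms(7) by simp
  qed
  show "r2 \<le> \<alpha>"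
  proof (rule ccontr)
    assume "\<not> r2 \<le> \<alpha>"
    then have "(\<alpha> - r1) * (\<alpha> - r2) < 0" using \<open>r1 \<le> \<beta>\<close> assms(2,3) by (simp add: mult_pos_neg)
    then show False using assms(6) by simp
  qed
qed

(* Conversely, a point (X, Y) between these lines is \<sigma>(r2, r1) where r1 \<le> r2 are the
   roots of z\<^sup>2 - X z + Y. *)
lemma sigma_preimage_in_rectangle:
  fixes \<alpha> \<beta> X Y :: real
  assumes "\<beta> < 1" "1 < \<alpha>"
    and h: "0 \<le> Y" "Y \<le> X - 1" "\<alpha> * (X - \<alpha>) \<le> Y" "Y \<le> \<beta> * (X - \<beta>)"
  shows "(X, Y) \<in> sigma ` ({1..\<alpha>} \<times> {0..\<beta>})"
proof -
  have "X * X - 4 * Y = (X - 2) * (X - 2) + 4 * (X - 1 - Y)" by (simp add: algebra_simps)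
  moreover have "0 \<le> (X - 2) * (X - 2) + 4 * (X - 1 - Y)"
    using h(2) by (intro add_nonneg_nonneg) auto
  ultimately have disc: "0 \<le> X * X - 4 * Y" by linarith
  define s where "s = sqrt (X * X - 4 * Y)"
  have "0 \<le> s" "s * s = X * X - 4 * Y" unfolding s_def using disc by simp_all
  define r1 where "r1 = (X - s) / 2"
  define r2 where "r2 = (X + s) / 2"
  have "r1 \<le> r2" unfolding r1_def r2_def using \<open>0 \<le> s\<close> by simp
  have sum: "r1 + r2 = X" unfolding r1_def r2_def by (simp add: field_simps)
  have prod: "r1 * r2 = Y" unfolding r1_def r2_def using \<open>s * s = X * X - 4 * Y\<close> by (simp add: field_simps)
  have roots: "(z - r1) * (z - r2) = z * z - X * z + Y" for z
    using sum prod by (simp add: algebra_simps) (metis distrib_left mult.commute)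
  have "(1 - r1) * (1 - r2) \<le> 0" "(\<beta> - r1) * (\<beta> - r2) \<le> 0" "0 \<le> (\<alpha> - r1) * (\<alpha> - r2)"
    unfolding roots using h by (simp_all add: algebra_simps)
  moreover have "0 \<le> r1 * r2" using prod h(1) by simp
  ultimately have bounds: "1 \<le> r2" "r2 \<le> \<alpha>" "0 \<le> r1" "r1 \<le> \<beta>"
    using roots_between_test_points[OF \<open>r1 \<le> r2\<close> assms(1,2)] by blast+
  have "sigma (r2, r1) = (X, Y)"
    unfolding sigma_def using sum prod by (simp add: add.commute mult.commute)
  moreover have "(r2, r1) \<in> {1..\<alpha>} \<times> {0..\<beta>}"
    using bounds by simp
  ultimately show ?thesis by force
qed

lemma sigma_rectangle_eq_hull:
  fixes \<alpha> \<beta> :: real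
  assumes "0 < \<beta>" "\<beta> < 1" "1 < \<alpha>"
  shows "sigma ` ({1..\<alpha>} \<times> {0..\<beta>}) = convex hull {(1,0), (1+\<beta>,\<beta>), (\<alpha>+\<beta>,\<alpha>*\<beta>), (\<alpha>,0)}"
proof
  define H where "H = {z::real\<times>real. (0,-1) \<bullet> z \<le> 0} \<inter> {z. (-1,1) \<bullet> z \<le> -1}
     \<inter> {z. (\<alpha>,-1) \<bullet> z \<le> \<alpha> * \<alpha>} \<inter> {z. (-\<beta>,1) \<bullet> z \<le> -\<beta> * \<beta>}"
  have H_iff: "z \<in> H \<longleftrightarrow> 0 \<le> snd z \<and> snd z \<le> fst z - 1 \<and>
      \<alpha> * (fst z - \<alpha>) \<le> snd z \<and> snd z \<le> \<beta> * (fst z - \<beta>)" for z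
    unfolding H_def by (auto simp: inner_prod_def algebra_simps)
  have "convex H"
    unfolding H_def by (intro convex_Int convex_halfspace_le)
  have "(\<alpha> - 1) * (1 - \<beta>) \<ge> 0" "(\<alpha> - 1) * (\<alpha> - \<beta>) \<ge> 0" "\<beta> * \<beta> \<le> \<beta>"
    using assms by (simp_all add: mult_le_cancel_left1)
  then have "{(1,0), (1+\<beta>,\<beta>), (\<alpha>+\<beta>,\<alpha>*\<beta>), (\<alpha>,0)} \<subseteq> H"
    using assms by (auto simp: H_iff algebra_simps)
  then have "convex hull {(1,0), (1+\<beta>,\<beta>), (\<alpha>+\<beta>,\<alpha>*\<beta>), (\<alpha>,0)} \<subseteq> H"
    using \<open>convex H\<close> by (rule hull_minimal)
  then show "convex hull {(1,0), (1+\<beta>,\<beta>), (\<alpha>+\<beta>,\<alpha>*\<beta>), (\<alpha>,0)} \<subseteq> sigma ` ({1..\<alpha>} \<times> {0..\<beta>})"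
    using sigma_preimage_in_rectangle[OF assms(2,3)] by (force simp: H_iff)
qed (rule sigma_rectangle_subset_hull[OF assms])

(* For 0 < \<beta> < 1 < \<alpha> the model is affinely equivalent to the orthotoric quadrilateral:
   the frame map for the corners \<sigma>(1,0), \<sigma>(1,\<beta>), \<sigma>(\<alpha>,0) has exactly the parameters \<alpha>, \<beta>. *)
lemma model_equivalent_sigma_rectangle:
  fixes \<alpha> \<beta> :: real
  assumes "0 < \<beta>" "\<beta> < 1" "1 < \<alpha>"
  shows "affinely_equivalent (model_quadrilateral \<alpha> \<beta>) (sigma ` ({1..\<alpha>} \<times> {0..\<beta>}))"
proof -
  define A B C D where "A = (1::real, 0::real)" "B = (1 + \<beta>, \<beta>)" "C = (\<alpha> + \<beta>, \<alpha> * \<beta>)" "D = (\<alpha>, 0::real)"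
  have areas: "signed_area A B D = - (\<beta> * (\<alpha> - 1))" "signed_area A C D = - (\<beta> * (\<alpha> - 1)) * \<alpha>"
    "signed_area A B C = - (\<beta> * (\<alpha> - 1)) * (1 - \<beta>)"
    unfolding A_B_C_D_def signed_area_def by (simp_all add: algebra_simps)
  have "\<beta> * (\<alpha> - 1) \<noteq> 0" using assms by simp
  then have "signed_area A B D \<noteq> 0"
    "signed_area A C D / signed_area A B D = \<alpha>" "1 - signed_area A B C / signed_area A B D = \<beta>"
    unfolding areas by simp_all
  then have "affinely_equivalent (convex hull {A, B, C, D}) (model_quadrilateral \<alpha> \<beta>)"
    using affinely_equivalent_model[of A B D C] by simp
  then show ?thesis
    unfolding sigma_rectangle_eq_hull[OF assms] A_B_C_D_def by (rule affinely_equivalent_sym)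
qed

lemma orthotoric_model:
  assumes D: "convex_quadrilateral D"
    and conds: "0 \<le> \<beta>" "\<beta> < 1" "1 \<le> \<alpha>" "\<alpha> - \<beta> \<ge> 1"
    and equiv: "affinely_equivalent D (model_quadrilateral \<alpha> \<beta>)"
    and no_par: "\<not> has_parallel_edges D"
  shows "\<beta> > 0 \<and> \<alpha> > 1 \<and> affinely_equivalent D (sigma ` ({1..\<alpha>} \<times> {0..\<beta>}))"
proof -
  have "\<beta> \<noteq> 0"
    using beta_nonzero_if_no_parallel_edges[OF D conds(3) equiv no_par] .
  then have "\<beta> > 0" using conds(1) by simp
  moreover have "\<alpha> > 1" using \<open>\<beta> > 0\<close> conds by linarith
  ultimately show ?thesis
    using affinely_equivalent_trans[OF equiv model_equivalent_sigma_rectangle] conds by simp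
qed

theorem mainTheorem6:
  assumes "convex_quadrilateral D"
  shows "(\<exists>!(\<alpha>, \<beta>). 0 \<le> \<beta> \<and> \<beta> < 1 \<and> 1 \<le> \<alpha> \<and> \<alpha> - \<beta> \<ge> 1
              \<and> affinely_equivalent D (model_quadrilateral \<alpha> \<beta>))
    \<and> (\<forall>\<alpha> \<beta>. 0 \<le> \<beta> \<and> \<beta> < 1 \<and> 1 \<le> \<alpha> \<and> \<alpha> - \<beta> \<ge> 1
              \<and> affinely_equivalent D (model_quadrilateral \<alpha> \<beta>)
              \<and> \<not> has_parallel_edges D
              \<longrightarrow> \<beta> > 0 \<and> \<alpha> > 1 \<and> affinely_equivalent D (sigma ` ({1..\<alpha>} \<times> {0..\<beta>})))"
  using model_exists_unique[OF assms] orthotoric_model[OF assms] by blast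

end
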